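(* Let $n\ge i\ge0$ and $I\subseteq[n]$ with $|I|=i$. Then $\mathrm{UL}_I={}^{w_I}L_i\cap\mathrm{UT}_n$, $\mathrm{UR}_I={}^{w_I}R_i\cap\mathrm{UT}_n$, and $\mathrm{UP}_I={}^{w_I}P_i\cap\mathrm{UT}_n$.
   Context: Fix the finite field $\mathbb{F}_q$; $[n]=\{1,\dots,n\}$, $[i]^c=[n]\setminus[i]$, $I^c=[n]\setminus I$. $\mathrm{GL}_n$ is the group of invertible $n\times n$ matrices over $\mathbb{F}_q$ and $\mathrm{UT}_n$ its unipotent upper triangular subgroup. Subgroups of $\mathrm{GL}_n$: $L_i=\{g:g_{r,s}\ne0\text{ only if }(r,s)\in[i]\times[i]\cup[i]^c\times[i]^c\}$, $R_i=\{g:(g-1_n)_{r,s}\ne0\text{ only if }(r,s)\in[i]\times[i]^c\}$, $P_i=\{g:g_{r,s}=0\text{ whenever }(r,s)\in[i]^c\times[i]\}$. Subgroups of $\mathrm{UT}_n$: $\mathrm{UL}_I=\{g\in\mathrm{UT}_n:(g-1_n)_{r,s}\ne0\text{ only if }(r,s)\in I\times I\cup I^c\times I^c\}$, $\mathrm{UR}_I=\{g\in\mathrm{UT}_n:(g-1_n)_{r,s}\ne0\text{ only if }(r,s)\in I\times I^c\}$, $\mathrm{UP}_I=\{g\in\mathrm{UT}_n:(g-1_n)_{r,s}=0\text{ whenever }(r,s)\in I^c\times I\}$. Writing $I=\{i_1<\dots<i_{|I|}\}$ and $I^c=\{j_1<\dots<j_{n-|I|}\}$, $w_I$ is the permutation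 of $[n]$ with $w_I(k)=i_k$ for $k\le|I|$ and $w_I(|I|+k)=j_k$. For a permutation $w$ and $H\le\mathrm{GL}_n$, ${}^wH=\{P_whP_w^{-1}:h\in H\}$ where $P_w$ is the permutation matrix with $(P_whP_w^{-1})_{w(r),w(s)}=h_{r,s}$. *)

theory Defs
  imports Main
begin

text \<open>n x n matrices over a field, indexed by [n] = {1..n}, represented as
  functions nat \<Rightarrow> nat \<Rightarrow> 'a that vanish outside [n] x [n].\<close>

type_synonym 'a matrix = "nat \<Rightarrow> nat \<Rightarrow> 'a"

definition is_mat :: "nat \<Rightarrow> 'a::zero matrix \<Rightarrow> bool" where
  "is_mat n A \<longleftrightarrow> (\<forall>r s. (r \<notin> {1..n} \<or> s \<notin> {1..n}) \<longrightarrow> A r s = 0)"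

definition mat_mult :: "nat \<Rightarrow> 'a::semiring_0 matrix \<Rightarrow> 'a matrix \<Rightarrow> 'a matrix" where
  "mat_mult n A B = (\<lambda>r s. \<Sum>k\<in>{1..n}. A r k * B k s)"

definition one_mat :: "nat \<Rightarrow> 'a::{zero,one} matrix" where
  "one_mat n = (\<lambda>r s. if r = s \<and> r \<in> {1..n} then 1 else 0)"

definition mat_inv :: "nat \<Rightarrow> 'a::semiring_1 matrix \<Rightarrow> 'a matrix" where
  "mat_inv n A = (THE B. is_mat n B \<and> mat_mult n A B = one_mat n \<and> mat_mult n B A = one_mat n)"

definition GL :: "nat \<Rightarrow> ('a::{finite,field}) matrix set" where
  "GL n = {A. is_mat n A \<and> (\<exists>B. is_mat n B \<and> mat_mult n A B = one_mat n \<and> mat_mult n B A = one_mat n)}"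

definition UT :: "nat \<Rightarrow> ('a::{finite,field}) matrix set" where
  "UT n = {g \<in> GL n. \<forall>r\<in>{1..n}. \<forall>s\<in>{1..n}. (s < r \<longrightarrow> g r s = 0) \<and> (r = s \<longrightarrow> g r s = 1)}"

definition Lsub :: "nat \<Rightarrow> nat \<Rightarrow> ('a::{finite,field}) matrix set" where
  "Lsub n i = {g \<in> GL n. \<forall>r\<in>{1..n}. \<forall>s\<in>{1..n}. g r s \<noteq> 0 \<longrightarrow>
      ((r \<le> i \<and> s \<le> i) \<or> (i < r \<and> i < s))}"

definition Rsub :: "nat \<Rightarrow> nat \<Rightarrow> ('a::{finite,field}) matrix set" where
  "Rsub n i = {g \<in> GL n. \<forall>r\<in>{1..n}. \<forall>s\<in>{1..n}. (g r s - one_mat n r s) \<noteq> 0 \<longrightarrow>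
      (r \<le> i \<and> i < s)}"

definition Psub :: "nat \<Rightarrow> nat \<Rightarrow> ('a::{finite,field}) matrix set" where
  "Psub n i = {g \<in> GL n. \<forall>r\<in>{1..n}. \<forall>s\<in>{1..n}. (i < r \<and> s \<le> i) \<longrightarrow> g r s = 0}"

definition UL :: "nat \<Rightarrow> nat set \<Rightarrow> ('a::{finite,field}) matrix set" where
  "UL n I = {g \<in> UT n. \<forall>r\<in>{1..n}. \<forall>s\<in>{1..n}. (g r s - one_mat n r s) \<noteq> 0 \<longrightarrow>
      ((r \<in> I \<and> s \<in> I) \<or> (r \<in> {1..n} - I \<and> s \<in> {1..n} - I))}"

definition UR :: "nat \<Rightarrow> nat set \<Rightarrow> ('a::{finite,field}) matrix set" where
  "UR n I = {g \<in> UT n. \<forall>r\<in>{1..n}. \<forall>s\<in>{1..n}. (g r s - one_mat n r s) \<noteq> 0 \<longrightarrow>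
      (r \<in> I \<and> s \<in> {1..n} - I)}"

definition UP :: "nat \<Rightarrow> nat set \<Rightarrow> ('a::{finite,field}) matrix set" where
  "UP n I = {g \<in> UT n. \<forall>r\<in>{1..n}. \<forall>s\<in>{1..n}. (r \<in> {1..n} - I \<and> s \<in> I) \<longrightarrow>
      g r s - one_mat n r s = 0}"

definition wI :: "nat \<Rightarrow> nat set \<Rightarrow> nat \<Rightarrow> nat" where
  "wI n I k = (if k \<in> {1..n}
     then (sorted_list_of_set I @ sorted_list_of_set ({1..n} - I)) ! (k - 1)
     else k)"

text \<open>Permutation matrix P_w with (P_w)_{r,s} = 1 iff r = w(s), so that
  (P_w h P_w^{-1})_{w(r),w(s)} = h_{r,s}.\<close>
definition perm_mat :: "nat \<Rightarrow> (nat \<Rightarrow> nat) \<Rightarrow> ('a::{zero,one}) matrix" where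
  "perm_mat n w = (\<lambda>r s. if r \<in> {1..n} \<and> s \<in> {1..n} \<and> r = w s then 1 else 0)"

definition conj_set :: "nat \<Rightarrow> (nat \<Rightarrow> nat) \<Rightarrow> ('a::{finite,field}) matrix set \<Rightarrow> 'a matrix set" where
  "conj_set n w H = (\<lambda>h. mat_mult n (mat_mult n (perm_mat n w) h) (mat_inv n (perm_mat n w))) ` H"

end

theory Submission
  imports Defs
begin

text \<open>Conjugation by the permutation matrix of a bijection w of [n] only relabels entries:
  g lies in the conjugate of H iff the matrix (g (w r) (w s))_{r,s} lies in H. As w_I maps
  the first |I| indices onto I and the others onto its complement, the entry conditions
  defining L_i, R_i, P_i (phrased by r \<le> i) pull back to those defining UL_I, UR_I, UP_I
  (phrased by r \<in> I). The diagonal, where these conditions differ, is harmless because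
  elements of UT_n are unipotent.\<close>

lemma mat_eqI:
  assumes "is_mat n A" "is_mat n B" "\<And>r s. r \<in> {1..n} \<Longrightarrow> s \<in> {1..n} \<Longrightarrow> A r s = B r s"
  shows "A = B"
proof (intro ext)
  fix r s
  show "A r s = B r s"
    using assms by (cases "r \<in> {1..n} \<and> s \<in> {1..n}") (auto simp: is_mat_def)
qed

lemma is_mat_mat_mult: "is_mat n A \<Longrightarrow> is_mat n B \<Longrightarrow> is_mat n (mat_mult n A B)"
  unfolding is_mat_def mat_mult_def by (auto intro!: sum.neutral)

lemma is_mat_perm_mat: "is_mat n (perm_mat n w)"
  by (simp add: is_mat_def perm_mat_def)

lemma is_mat_one_mat: "is_mat n (one_mat n)"
  by (simp add: is_mat_def one_mat_def)

lemma GL_is_mat: "g \<in> GL n \<Longrightarrow> is_mat n g"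
  unfolding GL_def by blast

definition conj_mat :: "nat \<Rightarrow> (nat \<Rightarrow> nat) \<Rightarrow> 'a::semiring_1 matrix \<Rightarrow> 'a matrix" where
  "conj_mat n w h = mat_mult n (mat_mult n (perm_mat n w) h) (mat_inv n (perm_mat n w))"

lemma conj_set_eq_image: "conj_set n w H = conj_mat n w ` H"
  by (simp add: conj_set_def conj_mat_def)

text \<open>reindex_mat n w g is P_w^{-1} g P_w (see conj_reindex_mat).\<close>

definition reindex_mat :: "nat \<Rightarrow> (nat \<Rightarrow> nat) \<Rightarrow> 'a::zero matrix \<Rightarrow> 'a matrix" where
  "reindex_mat n w A = (\<lambda>r s. if r \<in> {1..n} \<and> s \<in> {1..n} then A (w r) (w s) else 0)"

lemma is_mat_reindex_mat: "is_mat n (reindex_mat n w A)"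
  by (simp add: is_mat_def reindex_mat_def)

context
  fixes n :: nat and w :: "nat \<Rightarrow> nat"
  assumes bij: "bij_betw w {1..n} {1..n}"
begin

lemma perm_in_interval: "r \<in> {1..n} \<Longrightarrow> w r \<in> {1..n}"
  using bij by (rule bij_betw_apply)

lemma perm_eq_iff: "r \<in> {1..n} \<Longrightarrow> s \<in> {1..n} \<Longrightarrow> w r = w s \<longleftrightarrow> r = s"
  using bij by (auto simp: bij_betw_def inj_on_eq_iff)

lemma ball2_perm_iff:
  "(\<forall>r\<in>{1..n}. \<forall>s\<in>{1..n}. P (w r) (w s)) \<longleftrightarrow> (\<forall>r\<in>{1..n}. \<forall>s\<in>{1..n}. P r s)"
proof
  assume "\<forall>r\<in>{1..n}. \<forall>s\<in>{1..n}. P r s"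
  then show "\<forall>r\<in>{1..n}. \<forall>s\<in>{1..n}. P (w r) (w s)" using perm_in_interval by blast
next
  assume P: "\<forall>r\<in>{1..n}. \<forall>s\<in>{1..n}. P (w r) (w s)"
  have surj: "w ` {1..n} = {1..n}" using bij by (rule bij_betw_imp_surj_on)
  show "\<forall>r\<in>{1..n}. \<forall>s\<in>{1..n}. P r s"
  proof (intro ballI)
    fix r s assume "r \<in> {1..n}" "s \<in> {1..n}"
    then have "r \<in> w ` {1..n}" "s \<in> w ` {1..n}" by (simp_all only: surj)
    then obtain r' s' where "r' \<in> {1..n}" "s' \<in> {1..n}" "r = w r'" "s = w s'" by blast
    with P show "P r s" by simp
  qed
qed

lemma mat_eq_on_perm:
  assumes "is_mat n A" "is_mat n B"
    and "\<And>r s. r \<in> {1..n} \<Longrightarrow> s \<in> {1..n} \<Longrightarrow> A (w r) (w s) = B (w r) (w s)"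
  shows "A = B"
proof (rule mat_eqI[OF assms(1,2)])
  have "\<forall>r\<in>{1..n}. \<forall>s\<in>{1..n}. A (w r) (w s) = B (w r) (w s)" using assms(3) by blast
  then have "\<forall>r\<in>{1..n}. \<forall>s\<in>{1..n}. A r s = B r s" by (rule ball2_perm_iff[THEN iffD1])
  then show "\<And>r s. r \<in> {1..n} \<Longrightarrow> s \<in> {1..n} \<Longrightarrow> A r s = B r s" by blast
qed

lemma one_mat_perm:
  assumes "r \<in> {1..n}" "s \<in> {1..n}"
  shows "one_mat n (w r) (w s) = one_mat n r s"
  using assms perm_in_interval[OF assms(1)] by (simp add: one_mat_def perm_eq_iff[OF assms])

lemma perm_mat_mult_apply:
  assumes r: "r \<in> {1..n}"
  shows "mat_mult n (perm_mat n w) (B::'a::semiring_1 matrix) (w r) s = B r s"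
proof -
  have "mat_mult n (perm_mat n w) B (w r) s = (\<Sum>k\<in>{1..n}. if k = r then B k s else 0)"
    unfolding mat_mult_def perm_mat_def
  proof (rule sum.cong)
    fix k assume k: "k \<in> {1..n}"
    show "(if w r \<in> {1..n} \<and> k \<in> {1..n} \<and> w r = w k then 1 else 0) * B k s
        = (if k = r then B k s else 0)"
      using k perm_in_interval[OF r] perm_eq_iff[OF r k] by auto
  qed simp
  with r show ?thesis by simp
qed

lemma perm_mat_transpose_mult_apply:
  assumes r: "r \<in> {1..n}"
  shows "mat_mult n (\<lambda>r s. perm_mat n w s r) (B::'a::semiring_1 matrix) r s = B (w r) s"
proof -
  have "mat_mult n (\<lambda>r s. perm_mat n w s r) B r s = (\<Sum>k\<in>{1..n}. if k = w r then B k s else 0)"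
    unfolding mat_mult_def perm_mat_def by (rule sum.cong) (use r in auto)
  with r perm_in_interval[OF r] show ?thesis by simp
qed

lemma mult_perm_mat_transpose_apply:
  assumes s: "s \<in> {1..n}"
  shows "mat_mult n (B::'a::semiring_1 matrix) (\<lambda>r s. perm_mat n w s r) r (w s) = B r s"
proof -
  have "mat_mult n B (\<lambda>r s. perm_mat n w s r) r (w s) = (\<Sum>k\<in>{1..n}. if k = s then B r k else 0)"
    unfolding mat_mult_def perm_mat_def
  proof (rule sum.cong)
    fix k assume k: "k \<in> {1..n}"
    show "B r k * (if w s \<in> {1..n} \<and> k \<in> {1..n} \<and> w s = w k then 1 else 0)
        = (if k = s then B r k else 0)"
      using k perm_in_interval[OF s] perm_eq_iff[OF s k] by auto
  qed simp
  with s show ?thesis by simp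
qed

lemma mat_inv_perm_mat: "mat_inv n (perm_mat n w) = (\<lambda>r s. perm_mat n w s r :: 'a::semiring_1)"
  unfolding mat_inv_def
proof (rule the_equality)
  let ?P = "perm_mat n w :: 'a matrix" and ?T = "\<lambda>r s. perm_mat n w s r :: 'a"
  have T: "is_mat n ?T" by (simp add: is_mat_def perm_mat_def)
  have "mat_mult n ?P ?T = one_mat n"
  proof (rule mat_eq_on_perm)
    fix r s assume "r \<in> {1..n}" "s \<in> {1..n}"
    then show "mat_mult n ?P ?T (w r) (w s) = one_mat n (w r) (w s)"
      using perm_in_interval perm_eq_iff
      by (simp add: perm_mat_mult_apply one_mat_perm) (auto simp: perm_mat_def one_mat_def)
  qed (simp_all add: is_mat_mat_mult is_mat_perm_mat T is_mat_one_mat)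
  moreover have "mat_mult n ?T ?P = one_mat n"
  proof (rule mat_eqI)
    fix r s assume "r \<in> {1..n}" "s \<in> {1..n}"
    then show "mat_mult n ?T ?P r s = one_mat n r s"
      using perm_in_interval perm_eq_iff
      by (simp add: perm_mat_transpose_mult_apply) (auto simp: perm_mat_def one_mat_def)
  qed (simp_all add: is_mat_mat_mult is_mat_perm_mat T is_mat_one_mat)
  ultimately show "is_mat n ?T \<and> mat_mult n ?P ?T = one_mat n \<and> mat_mult n ?T ?P = one_mat n"
    using T by blast
next
  fix B :: "'a matrix"
  assume B: "is_mat n B \<and> mat_mult n (perm_mat n w) B = one_mat n
    \<and> mat_mult n B (perm_mat n w) = one_mat n"
  show "B = (\<lambda>r s. perm_mat n w s r)"
  proof (rule mat_eqI)
    fix r s assume r: "r \<in> {1..n}" and s: "s \<in> {1..n}"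
    have "B r s = one_mat n (w r) s" using B perm_mat_mult_apply[OF r, of B] by simp
    then show "B r s = perm_mat n w s r" using r s by (auto simp: one_mat_def perm_mat_def)
  qed (use B in \<open>simp_all add: is_mat_def perm_mat_def\<close>)
qed

lemma conj_mat_perm_apply:
  "r \<in> {1..n} \<Longrightarrow> s \<in> {1..n} \<Longrightarrow> conj_mat n w h (w r) (w s) = (h r s :: 'a::semiring_1)"
  by (simp add: conj_mat_def mat_inv_perm_mat mult_perm_mat_transpose_apply perm_mat_mult_apply)

lemma is_mat_conj_mat: "is_mat n (h :: 'a::semiring_1 matrix) \<Longrightarrow> is_mat n (conj_mat n w h)"
  unfolding conj_mat_def mat_inv_perm_mat
  by (intro is_mat_mat_mult is_mat_perm_mat) (simp_all add: is_mat_def perm_mat_def)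

lemma reindex_conj_mat:
  assumes "is_mat n (h :: 'a::semiring_1 matrix)"
  shows "reindex_mat n w (conj_mat n w h) = h"
  by (rule mat_eqI[OF is_mat_reindex_mat assms]) (simp add: reindex_mat_def conj_mat_perm_apply)

lemma conj_reindex_mat:
  assumes "is_mat n (g :: 'a::semiring_1 matrix)"
  shows "conj_mat n w (reindex_mat n w g) = g"
  by (rule mat_eq_on_perm[OF is_mat_conj_mat[OF is_mat_reindex_mat] assms])
    (simp add: conj_mat_perm_apply reindex_mat_def)

lemma mem_conj_set_iff:
  assumes "is_mat n g" and "\<And>h. h \<in> H \<Longrightarrow> is_mat n h"
  shows "g \<in> conj_set n w H \<longleftrightarrow> reindex_mat n w g \<in> H"
  unfolding conj_set_eq_image
  using assms reindex_conj_mat conj_reindex_mat by (metis image_iff)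

lemma reindex_mat_mult:
  "reindex_mat n w (mat_mult n A B) = mat_mult n (reindex_mat n w A) (reindex_mat n w B)"
proof (rule mat_eqI)
  fix r s assume r: "r \<in> {1..n}" and s: "s \<in> {1..n}"
  have "mat_mult n (reindex_mat n w A) (reindex_mat n w B) r s
      = (\<Sum>k\<in>{1..n}. A (w r) (w k) * B (w k) (w s))"
    unfolding mat_mult_def reindex_mat_def using r s by (intro sum.cong) auto
  also have "\<dots> = (\<Sum>k\<in>{1..n}. A (w r) k * B k (w s))"
    by (rule sum.reindex_bij_betw[OF bij])
  finally show "reindex_mat n w (mat_mult n A B) r s
      = mat_mult n (reindex_mat n w A) (reindex_mat n w B) r s"
    using r s by (simp add: reindex_mat_def mat_mult_def)
qed (simp_all add: is_mat_reindex_mat is_mat_mat_mult)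

lemma reindex_one_mat: "reindex_mat n w (one_mat n) = one_mat n"
  by (rule mat_eqI[OF is_mat_reindex_mat is_mat_one_mat]) (simp add: reindex_mat_def one_mat_perm)

lemma reindex_mat_GL:
  assumes "g \<in> GL n"
  shows "reindex_mat n w g \<in> GL n"
proof -
  obtain B where "mat_mult n g B = one_mat n" "mat_mult n B g = one_mat n"
    using assms unfolding GL_def by blast
  then have "mat_mult n (reindex_mat n w g) (reindex_mat n w B) = one_mat n"
    "mat_mult n (reindex_mat n w B) (reindex_mat n w g) = one_mat n"
    by (simp_all add: reindex_mat_mult[symmetric] reindex_one_mat)
  then show ?thesis unfolding GL_def using is_mat_reindex_mat by blast
qed

lemma mem_conj_set_GL_iff:
  assumes "g \<in> GL n"
  shows "g \<in> conj_set n w {h \<in> GL n. Q h} \<longleftrightarrow> Q (reindex_mat n w g)"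
proof -
  have "g \<in> conj_set n w {h \<in> GL n. Q h} \<longleftrightarrow> reindex_mat n w g \<in> {h \<in> GL n. Q h}"
    by (rule mem_conj_set_iff) (use assms in \<open>auto intro: GL_is_mat\<close>)
  with reindex_mat_GL[OF assms] show ?thesis by simp
qed

end

lemma bij_betw_wI:
  assumes "I \<subseteq> {1..n}"
  shows "bij_betw (wI n I) {1..n} {1..n}"
proof -
  define xs where "xs = sorted_list_of_set I @ sorted_list_of_set ({1..n} - I)"
  have "finite I" using assms finite_subset by blast
  then have xs: "distinct xs" "set xs = {1..n}" using assms by (auto simp: xs_def)
  then have "length xs = n" using distinct_card by fastforce
  have "bij_betw (\<lambda>k. k - 1) {1..n} {..<n}"
    by (rule bij_betwI') (auto intro: bexI[where x = "Suc _"])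
  then have "bij_betw ((!) xs \<circ> (\<lambda>k. k - 1)) {1..n} {1..n}"
    using bij_betw_nth[OF xs(1)] xs \<open>length xs = n\<close> by (blast intro: bij_betw_trans)
  then show ?thesis
    by (rule bij_betw_cong[THEN iffD1, rotated]) (simp add: wI_def xs_def)
qed

lemma wI_mem_iff:
  assumes "I \<subseteq> {1..n}" and r: "r \<in> {1..n}"
  shows "wI n I r \<in> I \<longleftrightarrow> r \<le> card I"
proof -
  have fin: "finite I" using assms(1) finite_subset by blast
  define ys where "ys = sorted_list_of_set ({1..n} - I)"
  have w: "wI n I r = (sorted_list_of_set I @ ys) ! (r - 1)"
    using r by (simp add: wI_def ys_def)
  show ?thesis
  proof (cases "r \<le> card I")
    case True
    moreover have "1 \<le> r" using r by simp
    ultimately have "r - 1 < length (sorted_list_of_set I)" using fin by simp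
    then have "wI n I r \<in> set (sorted_list_of_set I)" using w by (simp add: nth_append)
    then show ?thesis using True fin by simp
  next
    case False
    then have "\<not> r - 1 < card I" by simp
    then have "wI n I r = ys ! (r - 1 - card I)" using w fin by (simp add: nth_append)
    moreover have "r - 1 - card I < length ys"
      using False r card_Diff_subset[OF fin assms(1)] by (auto simp: ys_def)
    ultimately have "wI n I r \<in> set ys" by simp
    then show ?thesis using False by (simp add: ys_def)
  qed
qed

context
  fixes n i :: nat and I :: "nat set" and w :: "nat \<Rightarrow> nat"
  assumes bij: "bij_betw w {1..n} {1..n}"
    and perm_mem_iff: "\<And>r. r \<in> {1..n} \<Longrightarrow> w r \<in> I \<longleftrightarrow> r \<le> i"
begin

lemma UL_eq_conj_Lsub: "UL n I = conj_set n w (Lsub n i) \<inter> UT n"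
proof (intro set_eqI)
  fix g :: "'a::{finite,field} matrix"
  show "g \<in> UL n I \<longleftrightarrow> g \<in> conj_set n w (Lsub n i) \<inter> UT n"
  proof (cases "g \<in> UT n")
    case True
    then have "g \<in> GL n" by (simp add: UT_def)
    have "g \<in> conj_set n w (Lsub n i) \<longleftrightarrow>
        (\<forall>r\<in>{1..n}. \<forall>s\<in>{1..n}. g (w r) (w s) \<noteq> 0 \<longrightarrow>
          (w r \<in> I \<and> w s \<in> I) \<or> (w r \<notin> I \<and> w s \<notin> I))"
      unfolding Lsub_def mem_conj_set_GL_iff[OF bij \<open>g \<in> GL n\<close>]
      by (simp add: reindex_mat_def perm_mem_iff not_le)
    also have "\<dots> \<longleftrightarrow> (\<forall>r\<in>{1..n}. \<forall>s\<in>{1..n}. g r s \<noteq> 0 \<longrightarrow>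
          (r \<in> I \<and> s \<in> I) \<or> (r \<notin> I \<and> s \<notin> I))"
      by (rule ball2_perm_iff[OF bij])
    also have "\<dots> \<longleftrightarrow> g \<in> UL n I"
      using True by (auto simp: UL_def UT_def one_mat_def)
    finally show ?thesis using True by blast
  qed (simp add: UL_def)
qed

lemma UR_eq_conj_Rsub: "UR n I = conj_set n w (Rsub n i) \<inter> UT n"
proof (intro set_eqI)
  fix g :: "'a::{finite,field} matrix"
  show "g \<in> UR n I \<longleftrightarrow> g \<in> conj_set n w (Rsub n i) \<inter> UT n"
  proof (cases "g \<in> UT n")
    case True
    then have "g \<in> GL n" by (simp add: UT_def)
    have "g \<in> conj_set n w (Rsub n i) \<longleftrightarrow> (\<forall>r\<in>{1..n}. \<forall>s\<in>{1..n}.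
        g (w r) (w s) - one_mat n (w r) (w s) \<noteq> 0 \<longrightarrow> w r \<in> I \<and> w s \<notin> I)"
      unfolding Rsub_def mem_conj_set_GL_iff[OF bij \<open>g \<in> GL n\<close>]
      by (simp add: reindex_mat_def perm_mem_iff one_mat_perm[OF bij] not_le)
    also have "\<dots> \<longleftrightarrow> (\<forall>r\<in>{1..n}. \<forall>s\<in>{1..n}. g r s - one_mat n r s \<noteq> 0 \<longrightarrow> r \<in> I \<and> s \<notin> I)"
      by (rule ball2_perm_iff[OF bij])
    also have "\<dots> \<longleftrightarrow> g \<in> UR n I"
      using True by (auto simp: UR_def)
    finally show ?thesis using True by blast
  qed (simp add: UR_def)
qed

lemma UP_eq_conj_Psub: "UP n I = conj_set n w (Psub n i) \<inter> UT n"
proof (intro set_eqI)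
  fix g :: "'a::{finite,field} matrix"
  show "g \<in> UP n I \<longleftrightarrow> g \<in> conj_set n w (Psub n i) \<inter> UT n"
  proof (cases "g \<in> UT n")
    case True
    then have "g \<in> GL n" by (simp add: UT_def)
    have "g \<in> conj_set n w (Psub n i) \<longleftrightarrow>
        (\<forall>r\<in>{1..n}. \<forall>s\<in>{1..n}. w r \<notin> I \<and> w s \<in> I \<longrightarrow> g (w r) (w s) = 0)"
      unfolding Psub_def mem_conj_set_GL_iff[OF bij \<open>g \<in> GL n\<close>]
      by (simp add: reindex_mat_def perm_mem_iff not_le)
    also have "\<dots> \<longleftrightarrow> (\<forall>r\<in>{1..n}. \<forall>s\<in>{1..n}. r \<notin> I \<and> s \<in> I \<longrightarrow> g r s = 0)"
      by (rule ball2_perm_iff[OF bij])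
    also have "\<dots> \<longleftrightarrow> g \<in> UP n I"
      using True by (auto simp: UP_def one_mat_def)
    finally show ?thesis using True by blast
  qed (simp add: UP_def)
qed

end

theorem lemma6p5:
  fixes n i :: nat and I :: "nat set"
  assumes "i \<le> n" and "I \<subseteq> {1..n}" and "card I = i"
  shows "(UL n I :: ('a::{finite,field}) matrix set) = conj_set n (wI n I) (Lsub n i) \<inter> UT n
       \<and> (UR n I :: 'a matrix set) = conj_set n (wI n I) (Rsub n i) \<inter> UT n
       \<and> (UP n I :: 'a matrix set) = conj_set n (wI n I) (Psub n i) \<inter> UT n"
proof -
  have bij: "bij_betw (wI n I) {1..n} {1..n}"
    using assms(2) by (rule bij_betw_wI)
  have mem: "\<And>r. r \<in> {1..n} \<Longrightarrow> wI n I r \<in> I \<longleftrightarrow> r \<le> i"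
    using wI_mem_iff[OF assms(2)] assms(3) by blast
  show ?thesis
    using UL_eq_conj_Lsub[OF bij mem] UR_eq_conj_Rsub[OF bij mem] UP_eq_conj_Psub[OF bij mem]
    by blast
qed

end
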